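(* Consider one step of a delegated variational quantum algorithm (DVQA) in which a gradient approximation $g(\theta)=(g_1(\theta),\dots,g_{N_P}(\theta))$ of $\nabla f$ is computed via the Parameter Shift Rule, where $f(\theta)=\mathrm{Tr}[O\,U(\theta)\rho_{in}U^\dagger(\theta)]$ and $O=\sum_{i=1}^{N_o} c_iP_i$ is a global observable written as a real linear combination of local Pauli operators $P_i$. Each cost-function evaluation uses $N_s$ measurement shots (computation rounds). Let $\hat g(\theta)$ be the gradient obtained when $\delta$ of the computation rounds of the step are corrupted, let $e=\frac{\|g(\theta)-\hat g(\theta)\|}{\|g(\theta)\|}$ be the relative error of the gradient, and let $\epsilon_0>0$ be a lower bound on $\|g(\theta)\|$. Then $$e\le \frac{\sum_i |c_i|}{\epsilon_0 N_s}\,\delta .$$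
   Context: Parameter Shift Rule: for each parameter $\theta_j$ (with $N_P$ parameters in total), $g_j(\theta)=\frac12\big(f_{+}-f_{-}\big)$ where $f_{\pm}$ is $f$ evaluated with $\theta_j$ shifted by $\pm\pi/2$; hence one step requires $2N_P$ function evaluations and $2N_PN_s$ shots (computation rounds) in total. Each cost-function evaluation is estimated from the sample average of measured Pauli eigenvalues (each in $\{\pm1\}$) weighted by the coefficients $c_i$. A computation round is corrupted if the eigenvalue it returns is replaced by an arbitrary (adversarial) eigenvalue. The norm $\|\cdot\|$ denotes the $\ell_1$ norm $\|v\|=\sum_j |v_j|$. $\delta$ is the total number of corrupted computation rounds over all $2N_P$ function evaluations of the step. *)

theory Defs
  imports Complex_Main
begin

text \<open>Measurement record of one function evaluation: r s i is the eigenvalue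
(in {-1,1}) of Pauli term P_i returned by computation round s (s < Ns).\<close>
definition cost_est :: "nat \<Rightarrow> (nat \<Rightarrow> real) \<Rightarrow> nat \<Rightarrow> (nat \<Rightarrow> nat \<Rightarrow> real) \<Rightarrow> real" where
  "cost_est No c Ns r = (\<Sum>i<No. c i * ((\<Sum>s<Ns. r s i) / real Ns))"

text \<open>Parameter shift rule: m j True / m j False are the records of the
evaluations with theta_j shifted by +pi/2 / -pi/2.\<close>
definition psr_grad ::
  "nat \<Rightarrow> (nat \<Rightarrow> real) \<Rightarrow> nat \<Rightarrow> (nat \<Rightarrow> bool \<Rightarrow> nat \<Rightarrow> nat \<Rightarrow> real) \<Rightarrow> nat \<Rightarrow> real" where
  "psr_grad No c Ns m j = (cost_est No c Ns (m j True) - cost_est No c Ns (m j False)) / 2"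

definition l1norm :: "nat \<Rightarrow> (nat \<Rightarrow> real) \<Rightarrow> real" where
  "l1norm n v = (\<Sum>j<n. \<bar>v j\<bar>)"

end

theory Submission
  imports Defs
begin

text \<open>A corrupted round replaces an eigenvalue in \<open>{-1, 1}\<close> by another one, which moves
  the corresponding sample sum by at most 2. Hence each of the \<open>2 N\<^sub>P\<close> cost estimates of
  the step moves by at most \<open>2 (\<Sum>i. \<bar>c i\<bar>) \<delta>\<^sub>j\<^sub>b / N\<^sub>s\<close>, where \<open>\<delta>\<^sub>j\<^sub>b\<close> counts its corrupted
  rounds; the factor \<open>1/2\<close> of the parameter shift rule cancels the 2, and summing over
  all evaluations gives \<open>\<parallel>g - g'\<parallel> \<le> (\<Sum>i. \<bar>c i\<bar>) \<delta> / N\<^sub>s\<close>. Dividing by \<open>\<parallel>g\<parallel> \<ge> \<epsilon>\<^sub>0\<close> yields the bound.\<close>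

lemma abs_sum_diff_le_twice_card:
  fixes f g :: "'a \<Rightarrow> real"
  assumes "finite A"
    and "\<And>x. x \<in> A \<Longrightarrow> \<bar>f x\<bar> \<le> 1" "\<And>x. x \<in> A \<Longrightarrow> \<bar>g x\<bar> \<le> 1"
    and "\<And>x. x \<in> A \<Longrightarrow> x \<notin> S \<Longrightarrow> f x = g x"
  shows "\<bar>(\<Sum>x\<in>A. f x) - (\<Sum>x\<in>A. g x)\<bar> \<le> 2 * real (card (A \<inter> S))"
proof -
  have "\<bar>(\<Sum>x\<in>A. f x) - (\<Sum>x\<in>A. g x)\<bar> \<le> (\<Sum>x\<in>A. \<bar>f x - g x\<bar>)"
    by (metis sum_abs sum_subtractf)
  also have "\<dots> \<le> (\<Sum>x\<in>A. if x \<in> S then 2 else 0)"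
  proof (rule sum_mono)
    fix x assume "x \<in> A"
    then show "\<bar>f x - g x\<bar> \<le> (if x \<in> S then 2 else 0)"
      using assms(2-4)[of x] by auto
  qed
  also have "\<dots> = 2 * real (card (A \<inter> S))"
    using \<open>finite A\<close> by (simp add: sum.If_cases)
  finally show ?thesis .
qed

lemma abs_cost_est_diff_le:
  assumes "\<And>s i. s < Ns \<Longrightarrow> i < No \<Longrightarrow> \<bar>r s i\<bar> \<le> 1"
    and "\<And>s i. s < Ns \<Longrightarrow> i < No \<Longrightarrow> \<bar>r' s i\<bar> \<le> 1"
    and "\<And>s i. s \<notin> S \<Longrightarrow> r' s i = r s i"
  shows "\<bar>cost_est No c Ns r - cost_est No c Ns r'\<bar>
    \<le> (\<Sum>i<No. \<bar>c i\<bar>) * (2 * real (card ({..<Ns} \<inter> S)) / real Ns)"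
proof -
  let ?k = "2 * real (card ({..<Ns} \<inter> S)) / real Ns"
  have "cost_est No c Ns r - cost_est No c Ns r'
      = (\<Sum>i<No. c i * (((\<Sum>s<Ns. r s i) - (\<Sum>s<Ns. r' s i)) / real Ns))"
    by (simp add: cost_est_def sum_subtractf right_diff_distrib diff_divide_distrib)
  also have "\<bar>\<dots>\<bar> \<le> (\<Sum>i<No. \<bar>c i\<bar> * ?k)"
  proof (rule order_trans[OF sum_abs sum_mono])
    fix i assume "i \<in> {..<No}"
    then have "\<bar>(\<Sum>s<Ns. r s i) - (\<Sum>s<Ns. r' s i)\<bar> \<le> 2 * real (card ({..<Ns} \<inter> S))"
      using assms by (intro abs_sum_diff_le_twice_card) auto
    then show "\<bar>c i * (((\<Sum>s<Ns. r s i) - (\<Sum>s<Ns. r' s i)) / real Ns)\<bar> \<le> \<bar>c i\<bar> * ?k"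
      by (simp add: abs_mult mult_left_mono divide_right_mono)
  qed
  finally show ?thesis
    by (simp only: sum_distrib_right)
qed

lemma abs_psr_grad_diff_le:
  assumes "\<And>b s i. s < Ns \<Longrightarrow> i < No \<Longrightarrow> \<bar>m j b s i\<bar> \<le> 1"
    and "\<And>b s i. s < Ns \<Longrightarrow> i < No \<Longrightarrow> \<bar>m' j b s i\<bar> \<le> 1"
    and "\<And>b s i. s \<notin> S b \<Longrightarrow> m' j b s i = m j b s i"
  shows "\<bar>psr_grad No c Ns m j - psr_grad No c Ns m' j\<bar>
    \<le> (\<Sum>i<No. \<bar>c i\<bar>) / real Ns * (\<Sum>b\<in>UNIV. real (card ({..<Ns} \<inter> S b)))"
proof -
  let ?d = "\<lambda>b. cost_est No c Ns (m j b) - cost_est No c Ns (m' j b)"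
  have bound: "\<bar>?d b\<bar> \<le> (\<Sum>i<No. \<bar>c i\<bar>) * (2 * real (card ({..<Ns} \<inter> S b)) / real Ns)" for b
    using assms by (intro abs_cost_est_diff_le) auto
  have "psr_grad No c Ns m j - psr_grad No c Ns m' j = (?d True - ?d False) / 2"
    by (simp add: psr_grad_def field_simps)
  then have "\<bar>psr_grad No c Ns m j - psr_grad No c Ns m' j\<bar> = \<bar>?d True - ?d False\<bar> / 2"
    by (simp only: abs_divide abs_numeral)
  also have "\<dots> \<le> (\<bar>?d True\<bar> + \<bar>?d False\<bar>) / 2"
    by (intro divide_right_mono abs_triangle_ineq4) simp
  also have "\<dots> \<le> ((\<Sum>i<No. \<bar>c i\<bar>) * (2 * real (card ({..<Ns} \<inter> S True)) / real Ns)
      + (\<Sum>i<No. \<bar>c i\<bar>) * (2 * real (card ({..<Ns} \<inter> S False)) / real Ns)) / 2"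
    using bound by (intro divide_right_mono add_mono) auto
  also have "\<dots> = (\<Sum>i<No. \<bar>c i\<bar>) / real Ns * (\<Sum>b\<in>UNIV. real (card ({..<Ns} \<inter> S b)))"
    by (simp add: UNIV_bool add_divide_distrib field_simps)
  finally show ?thesis .
qed

lemma card_eq_sum_card_fibres:
  assumes "finite A" "finite D" "D \<subseteq> A \<times> UNIV"
  shows "card D = (\<Sum>a\<in>A. card {x. (a, x) \<in> D})"
proof -
  have "D = Sigma A (\<lambda>a. {x. (a, x) \<in> D})"
    using assms(3) by auto
  moreover have "finite (Pair a -` D)" for a
    using \<open>finite D\<close> by (rule finite_vimageI) (simp add: inj_on_def)
  then have "finite {x. (a, x) \<in> D}" for a
    by (simp add: vimage_def)
  ultimately show ?thesis
    using \<open>finite A\<close> by (metis card_SigmaI)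
qed

lemma card_eq_sum_card_slices:
  fixes D :: "('a \<times> 'b::finite \<times> 'c) set"
  assumes "finite A" "finite B" "D \<subseteq> A \<times> UNIV \<times> B"
  shows "card D = (\<Sum>a\<in>A. \<Sum>b\<in>UNIV. card (B \<inter> {x. (a, b, x) \<in> D}))"
proof -
  have "finite D"
    using assms by (metis finite_SigmaI finite_UNIV finite_subset)
  have "card {y. (a, y) \<in> D} = (\<Sum>b\<in>UNIV. card (B \<inter> {x. (a, b, x) \<in> D}))" for a
  proof -
    have "{y. (a, y) \<in> D} \<subseteq> UNIV \<times> B"
      using assms(3) by auto
    then have "finite {y. (a, y) \<in> D}"
      using \<open>finite B\<close> by (metis finite_SigmaI finite_UNIV finite_subset)
    moreover have "B \<inter> {x. (a, b, x) \<in> D} = {x. (a, b, x) \<in> D}" for b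
      using assms(3) by auto
    ultimately show ?thesis
      by (simp add: card_eq_sum_card_fibres[of UNIV])
  qed
  moreover have "card D = (\<Sum>a\<in>A. card {y. (a, y) \<in> D})"
    using assms \<open>finite D\<close> by (intro card_eq_sum_card_fibres) auto
  ultimately show ?thesis
    by simp
qed

theorem lemma1:
  fixes NP No Ns :: nat
    and c :: "nat \<Rightarrow> real"
    and m m' :: "nat \<Rightarrow> bool \<Rightarrow> nat \<Rightarrow> nat \<Rightarrow> real"
    and D :: "(nat \<times> bool \<times> nat) set"
    and \<epsilon>0 :: real
  assumes Ns_pos: "Ns > 0"
    and honest_eig: "\<And>j b s i. j < NP \<Longrightarrow> s < Ns \<Longrightarrow> i < No \<Longrightarrow> m j b s i \<in> {-1, 1}"
    and corr_eig: "\<And>j b s i. j < NP \<Longrightarrow> s < Ns \<Longrightarrow> i < No \<Longrightarrow> m' j b s i \<in> {-1, 1}"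
    and D_rounds: "D \<subseteq> {..<NP} \<times> (UNIV :: bool set) \<times> {..<Ns}"
    and uncorrupted: "\<And>j b s i. (j, b, s) \<notin> D \<Longrightarrow> m' j b s i = m j b s i"
    and eps_pos: "\<epsilon>0 > 0"
    and eps_lb: "l1norm NP (psr_grad No c Ns m) \<ge> \<epsilon>0"
  shows "l1norm NP (\<lambda>j. psr_grad No c Ns m j - psr_grad No c Ns m' j)
           / l1norm NP (psr_grad No c Ns m)
         \<le> (\<Sum>i<No. \<bar>c i\<bar>) / (\<epsilon>0 * real Ns) * real (card D)"
proof -
  let ?C = "(\<Sum>i<No. \<bar>c i\<bar>) / real Ns"
  let ?err = "l1norm NP (\<lambda>j. psr_grad No c Ns m j - psr_grad No c Ns m' j)"
  have eig_bound: "\<bar>m j b s i\<bar> \<le> 1" "\<bar>m' j b s i\<bar> \<le> 1"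
    if "j < NP" "s < Ns" "i < No" for j b s i
    using honest_eig[of j s i b] corr_eig[of j s i b] that by auto
  have "\<bar>psr_grad No c Ns m j - psr_grad No c Ns m' j\<bar>
      \<le> ?C * (\<Sum>b\<in>UNIV. real (card ({..<Ns} \<inter> {s. (j, b, s) \<in> D})))" if "j < NP" for j
    using that eig_bound uncorrupted by (intro abs_psr_grad_diff_le) auto
  moreover have "card D = (\<Sum>j<NP. \<Sum>b\<in>UNIV. card ({..<Ns} \<inter> {s. (j, b, s) \<in> D}))"
    using D_rounds by (intro card_eq_sum_card_slices) auto
  ultimately have "?err \<le> ?C * real (card D)"
    unfolding l1norm_def by (auto simp: sum_distrib_left intro!: sum_mono)
  moreover have "?err \<ge> 0"
    by (simp add: l1norm_def sum_nonneg)
  ultimately have "?err / l1norm NP (psr_grad No c Ns m) \<le> ?C * real (card D) / \<epsilon>0"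
    using eps_pos eps_lb by (intro frac_le) auto
  then show ?thesis
    by (simp add: mult.commute)
qed

end
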